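(* For positive integers $\ell,m$, let $A(\ell,m)$ be the $(\ell+m)\times(\ell+m)$ coloring matrix with entries $a_{ij}=0$ if $i,j>\ell$ and $a_{ij}=1$ otherwise. Then for all positive integers $\ell,m,n$ and $1\le i\le\ell$, $$t_{A(\ell,m)}^{(i)}(n)=\frac1n\sum_{k=1}^{n}(m-\ell)^{n-k}\ell^{k-1}\binom{n}{k}\binom{2n+k-2}{k-1};$$ for $\ell+1\le i\le\ell+m$ and $n\ge2$, $$t_{A(\ell,m)}^{(i)}(n)=\frac{1}{n-1}\sum_{k=1}^{n-1}(m-\ell)^{n-k-1}\ell^{k}\binom{n-1}{k}\binom{2n+k-2}{k-1};$$ and for $n\ge2$, $$t_{A(\ell,m)}(n)=\sum_{k=1}^{n}\frac{(2m-\ell)n-mk+(\ell-m)}{n(n-1)}(m-\ell)^{n-k-1}\ell^{k}\binom{n}{k}\binom{2n+k-2}{k-1}.$$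
   Context: A plane tree is an unlabeled rooted tree in which the children of every vertex are linearly ordered. A coloring matrix is a square matrix $A=(a_{ij})$ with entries in $\{0,1\}$. An $A$-coloring of a plane tree assigns to each vertex a color (an index of a row of $A$) such that whenever a vertex of color $j$ is a child of a vertex of color $i$, $a_{ij}=1$. Let $t_A(n)$ be the number of pairs (plane tree with $n$ vertices, $A$-coloring of it) and $t_A^{(i)}(n)$ the number of those with root color $i$. Here $0^0=1$. *)

theory Defs
  imports Complex_Main
begin

text \<open>A plane tree is a \<open>unit ptree\<close>; a pair
  (plane tree, coloring) is the same thing as a \<open>nat ptree\<close> whose labels
  are the colors.\<close>
datatype 'a ptree = PNode 'a "'a ptree list"

fun nverts :: "'a ptree \<Rightarrow> nat" where
  "nverts (PNode c ts) = 1 + sum_list (map nverts ts)"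

fun root_label :: "'a ptree \<Rightarrow> 'a" where
  "root_label (PNode c ts) = c"

text \<open>A coloring matrix of size N is a 0/1 matrix, given as a predicate
  \<open>A i j\<close> (meaning a_ij = 1) on indices 1..N.\<close>
fun A_colored :: "nat \<Rightarrow> (nat \<Rightarrow> nat \<Rightarrow> bool) \<Rightarrow> nat ptree \<Rightarrow> bool" where
  "A_colored N A (PNode c ts) =
     (c \<in> {1..N} \<and> (\<forall>t\<in>set ts. A c (root_label t) \<and> A_colored N A t))"

definition t_A :: "nat \<Rightarrow> (nat \<Rightarrow> nat \<Rightarrow> bool) \<Rightarrow> nat \<Rightarrow> nat" where
  "t_A N A n = card {T. A_colored N A T \<and> nverts T = n}"

definition t_A_root :: "nat \<Rightarrow> (nat \<Rightarrow> nat \<Rightarrow> bool) \<Rightarrow> nat \<Rightarrow> nat \<Rightarrow> nat" where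
  "t_A_root N A i n = card {T. A_colored N A T \<and> root_label T = i \<and> nverts T = n}"

definition A_lm :: "nat \<Rightarrow> nat \<Rightarrow> nat \<Rightarrow> nat \<Rightarrow> bool" where
  "A_lm l m i j = (\<not> (i > l \<and> j > l))"

end

theory Submission
  imports Defs "HOL-Computational_Algebra.Formal_Laurent_Series"
begin

(* Let T and B be the generating functions of A(l,m)-colored trees whose root has a fixed
   colour i <= l, resp. i > l.  Any tree may hang below a low root, only trees with a low root
   below a high one; with u = l T this reads
     T = X / (1 - u - m B),    B = X / (1 - u).
   Eliminating B gives u (1 - u)^2 = X (l + (m - l) u), so u is the compositional inverse of
   X (1 - X)^2 / (l + (m - l) X).  Lagrange inversion with phi = (l + (m - l) X) / (1 - X)^2
   yields the coefficients of u and of 1 / (1 - u), and t_A = l T + m B coefficientwise. *)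

unbundle fps_syntax

section \<open>Lagrange inversion\<close>

lemma fls_residue_deriv_times_inverse_power:
  fixes f :: "'a::field_char_0 fls"
  shows "fls_residue (fls_deriv f * inverse f ^ Suc s) =
           (if s = 0 then of_int (fls_subdegree f) else 0)"
proof (cases "s = 0")
  case True
  then show ?thesis using fls_residue_deriv_times_inverse_eq_subdegree(1)[of f] by simp
next
  case False
  have "fls_deriv (inverse f ^ s)
      = of_nat s * inverse f ^ (s - 1) * (- inverse f * fls_deriv f * inverse f)"
    by (simp add: fls_deriv_power fls_inverse_deriv_divring)
  also have "\<dots> = - of_nat s * (fls_deriv f * inverse f ^ Suc s)"
    using False by (cases s) (simp_all add: algebra_simps)
  finally have "fls_deriv f * inverse f ^ Suc s = fls_deriv (fls_const (- 1 / of_nat s) * inverse f ^ s)"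
    using False by (simp add: fls_deriv_mult_const_left fls_of_nat)
  then show ?thesis using False by (simp only: fls_residue_deriv) simp
qed

(* As Laurent series, X^(-n) phi^n = w^(-n), so the coefficient is the residue of w' w^(j-1-n):
   that of a derivative unless j = n, and the subdegree 1 of w if j = n. *)
lemma fps_power_deriv_phi_power_nth:
  fixes w \<phi> :: "'a::field_char_0 fps"
  assumes w\<phi>: "w * \<phi> = fps_X" and \<phi>0: "\<phi> $ 0 \<noteq> 0" and j: "1 \<le> j" "j \<le> n"
  shows "(w ^ (j - 1) * fps_deriv w * \<phi> ^ n) $ (n - 1) = (if j = n then 1 else 0)"
proof -
  define W where "W = fps_to_fls w"
  define P where "P = fps_to_fls \<phi>"
  have WP: "W * P = fls_X"
    unfolding W_def P_def by (metis fls_times_fps_to_fls w\<phi> fps_X_to_fls)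
  then have W0: "W \<noteq> 0" by auto
  have "w $ 0 = 0" using arg_cong[OF w\<phi>, of "\<lambda>f. f $ 0"] \<phi>0 by simp
  moreover have "w $ 1 \<noteq> 0"
    using arg_cong[OF w\<phi>, of "\<lambda>f. f $ 1"] \<open>w $ 0 = 0\<close> by auto
  ultimately have "subdegree w = 1" by (metis One_nat_def subdegreeI less_one)
  then have subdegree_W: "fls_subdegree W = 1" by (simp add: W_def fls_subdegree_fls_to_fps)
  have "P = fls_X * inverse W" using WP W0 by (simp add: field_simps)
  moreover have "fls_X_intpow (- int n) = inverse (fls_X :: 'a fls) ^ n"
    by (simp add: fls_inverse_X fls_X_inv_power_conv_shift_1)
  ultimately have X_P: "fls_X_intpow (- int n) * P ^ n = inverse W ^ n"
    by (simp add: power_mult_distrib flip: mult.assoc power_mult_distrib)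
  have W_inverse_W: "W ^ (j - 1) * inverse W ^ n = inverse W ^ Suc (n - j)"
  proof -
    have "n = (j - 1) + Suc (n - j)" using j by simp
    then have "inverse W ^ n = inverse W ^ (j - 1) * inverse W ^ Suc (n - j)"
      by (metis power_add)
    then show ?thesis using W0 by (simp add: power_inverse field_simps)
  qed
  have "(w ^ (j - 1) * fps_deriv w * \<phi> ^ n) $ (n - 1)
      = fls_residue (fls_X_intpow (- int n) * fps_to_fls (w ^ (j - 1) * fps_deriv w * \<phi> ^ n))"
    using j fls_residue_shift_nth[of "fps_to_fls (w ^ (j - 1) * fps_deriv w * \<phi> ^ n)" "int n - 1"]
    by (simp add: nat_diff_distrib)
  also have "\<dots> = fls_residue (fls_deriv W * (W ^ (j - 1) * (fls_X_intpow (- int n) * P ^ n)))"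
    unfolding W_def P_def
    by (simp add: fls_times_fps_to_fls fps_to_fls_power fls_deriv_fps_to_fls ac_simps)
  also have "\<dots> = fls_residue (fls_deriv W * inverse W ^ Suc (n - j))"
    by (simp only: X_P W_inverse_W)
  also have "\<dots> = (if j = n then 1 else 0)"
    using j by (simp only: fls_residue_deriv_times_inverse_power subdegree_W) simp
  finally show ?thesis .
qed

(* The classical form: if u is the compositional inverse of w = X / phi, then
   n [X^n] H(u) = [X^(n-1)] H' phi^n; here D = H(u). *)
lemma fps_lagrange_inversion:
  fixes w \<phi> D H :: "'a::field_char_0 fps"
  assumes w\<phi>: "w * \<phi> = fps_X" and \<phi>0: "\<phi> $ 0 \<noteq> 0" and DH: "D oo w = H" and n: "n > 0"
  shows "of_nat n * D $ n = (fps_deriv H * \<phi> ^ n) $ (n - 1)"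
proof -
  have w0: "w $ 0 = 0" using arg_cong[OF w\<phi>, of "\<lambda>f. f $ 0"] \<phi>0 by simp
  define P where "P = (\<Sum>j\<le>n. fps_const (D $ j) * w ^ j)"
  have "H $ i = P $ i" if "i \<le> n" for i
  proof -
    have "H $ i = (\<Sum>j=0..i. D $ j * (w ^ j) $ i)" using DH fps_compose_nth by metis
    also have "\<dots> = (\<Sum>j\<le>n. D $ j * (w ^ j) $ i)"
      using that startsby_zero_power_prefix[OF w0] by (intro sum.mono_neutral_left) auto
    also have "\<dots> = P $ i" by (simp add: P_def fps_sum_nth)
    finally show ?thesis .
  qed
  then have "(fps_deriv H * \<phi> ^ n) $ (n - 1) = (fps_deriv P * \<phi> ^ n) $ (n - 1)"
    using n unfolding fps_mult_nth by (intro sum.cong refl) auto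
  also have "fps_deriv P = (\<Sum>j\<le>n. fps_const (D $ j * of_nat j) * (w ^ (j - 1) * fps_deriv w))"
    unfolding P_def fps_deriv_sum
    by (intro sum.cong refl) (simp add: fps_deriv_power mult_ac fps_of_nat flip: fps_const_mult)
  also have "((\<Sum>j\<le>n. fps_const (D $ j * of_nat j) * (w ^ (j - 1) * fps_deriv w)) * \<phi> ^ n) $ (n - 1)
      = (\<Sum>j\<le>n. D $ j * of_nat j * (w ^ (j - 1) * fps_deriv w * \<phi> ^ n) $ (n - 1))"
    by (simp add: sum_distrib_right fps_sum_nth mult.assoc)
  also have "\<dots> = (\<Sum>j\<le>n. if j = n then D $ j * of_nat j else 0)"
  proof (intro sum.cong refl)
    fix j assume "j \<in> {..n}"
    then show "D $ j * of_nat j * (w ^ (j - 1) * fps_deriv w * \<phi> ^ n) $ (n - 1)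
        = (if j = n then D $ j * of_nat j else 0)"
      using fps_power_deriv_phi_power_nth[OF w\<phi> \<phi>0, of j n] by (cases "j = 0") auto
  qed
  also have "\<dots> = of_nat n * D $ n" by simp
  finally show ?thesis by simp
qed

section \<open>Coefficients of a root of the cubic\<close>

lemma fps_linear_power_nth:
  fixes a c :: "'a::comm_ring_1"
  shows "((fps_const a + fps_const c * fps_X) ^ N) $ j = of_nat (N choose j) * a ^ (N - j) * c ^ j"
proof -
  have "(fps_const a + fps_const c * fps_X) ^ N
      = (\<Sum>k\<le>N. fps_const (of_nat (N choose k) * a ^ (N - k) * c ^ k) * fps_X ^ k)"
    unfolding binomial_ring add.commute[of "fps_const a"]
    by (intro sum.cong refl)
       (simp add: power_mult_distrib fps_of_nat mult_ac flip: fps_const_mult fps_const_power)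
  then show ?thesis
    by (cases "j \<le> N") (simp_all add: fps_sum_nth if_distrib binomial_eq_0 cong: if_cong)
qed

lemma fps_linear_power_div_one_minus_X_power_nth:
  fixes a c :: "'a::field_char_0"
  assumes N: "N > 0" and p: "p > 0"
  shows "((fps_const a + fps_const c * fps_X) ^ N * inverse ((1 - fps_X) ^ p)) $ (N - 1)
       = (\<Sum>k=1..N. c ^ (N - k) * a ^ k * of_nat (N choose k) * of_nat ((p + k - 2) choose (k - 1)))"
proof -
  have Q: "inverse ((1 - fps_X :: 'a fps) ^ p) $ i = of_nat ((p + i - 1) choose i)" for i
    using one_minus_const_fps_X_neg_power'[OF p, of "1::'a"] by simp
  obtain M where M: "N = Suc M" using N by (cases N) auto
  have "((fps_const a + fps_const c * fps_X) ^ N * inverse ((1 - fps_X) ^ p)) $ (N - 1)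
      = (\<Sum>i=0..M. of_nat ((p + i - 1) choose i)
                      * (of_nat (N choose (M - i)) * a ^ (N - (M - i)) * c ^ (M - i)))"
    by (subst mult.commute) (simp only: M diff_Suc_1 fps_mult_nth Q fps_linear_power_nth)
  also have "\<dots> = (\<Sum>i=0..M. c ^ (N - Suc i) * a ^ Suc i * of_nat (N choose Suc i)
                          * of_nat ((p + Suc i - 2) choose (Suc i - 1)))"
  proof (intro sum.cong refl)
    fix i assume "i \<in> {0..M}"
    then have "N choose (M - i) = N choose Suc i" "N - (M - i) = Suc i" "N - Suc i = M - i"
      using M binomial_symmetric[of "Suc i" N] by auto
    then show "of_nat ((p + i - 1) choose i)
                 * (of_nat (N choose (M - i)) * a ^ (N - (M - i)) * c ^ (M - i))
        = c ^ (N - Suc i) * a ^ Suc i * of_nat (N choose Suc i)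
            * of_nat ((p + Suc i - 2) choose (Suc i - 1))"
      by simp
  qed
  also have "\<dots> = (\<Sum>k=1..N. c ^ (N - k) * a ^ k * of_nat (N choose k) * of_nat ((p + k - 2) choose (k - 1)))"
    unfolding M One_nat_def sum.shift_bounds_cl_Suc_ivl ..
  finally show ?thesis .
qed

lemma fps_cubic_compose_inverse:
  fixes u :: "'a::field_char_0 fps" and a c :: 'a
  assumes u0: "u $ 0 = 0" and a: "a \<noteq> 0"
    and cubic: "u * (1 - u) ^ 2 = fps_X * (fps_const a + fps_const c * u)"
  shows "u oo (fps_X * (1 - fps_X) ^ 2 * inverse (fps_const a + fps_const c * fps_X)) = fps_X"
proof -
  define G where "G = fps_const a + fps_const c * fps_X"
  define w where "w = fps_X * (1 - fps_X) ^ 2 * inverse G"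
  have G0: "G $ 0 \<noteq> 0" using a by (simp add: G_def)
  have wG: "w * G = fps_X * (1 - fps_X) ^ 2"
    using inverse_mult_eq_1[OF G0] by (simp add: w_def mult.assoc)
  have w0: "w $ 0 = 0" by (simp add: w_def)
  have w1: "w $ 1 \<noteq> 0"
    using arg_cong[OF wG, of "\<lambda>f. f $ 1"] w0 by (auto simp: power2_eq_square)
  have Gu: "G oo u = fps_const a + fps_const c * u"
    by (simp add: G_def fps_compose_add_distrib fps_compose_mult_distrib[OF u0] u0)
  have "(w oo u) * (G oo u) = (fps_X * (1 - fps_X) ^ 2) oo u"
    by (simp only: wG fps_compose_mult_distrib[OF u0, symmetric])
  also have "\<dots> = fps_X * (G oo u)"
    using cubic by (simp add: Gu fps_compose_mult_distrib[OF u0] fps_compose_sub_distrib u0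
        flip: fps_compose_power[OF u0])
  finally have "w oo u = fps_X"
    using G0 by (metis Gu fps_compose_nth_0 mult_right_cancel fps_nonzero_nth)
  then have "fps_inv w oo fps_X = (fps_inv w oo w) oo u"
    using fps_compose_assoc[OF u0 w0] by simp
  then have "u = fps_inv w"
    using fps_inv[OF w0 w1] u0 by simp
  then show ?thesis
    using fps_inv[OF w0 w1] by (simp add: w_def G_def)
qed

lemma fps_cubic_lagrange_form:
  fixes a c :: "'a::field_char_0"
  assumes "a \<noteq> 0"
  defines "G \<equiv> fps_const a + fps_const c * fps_X"
  shows "(fps_X * (1 - fps_X) ^ 2 * inverse G) * (G * inverse ((1 - fps_X) ^ 2)) = fps_X"
    and "(G * inverse ((1 - fps_X) ^ 2)) $ 0 \<noteq> 0"
proof -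
  have G0: "G $ 0 \<noteq> 0" using assms by (simp add: G_def)
  have "inverse G * G = 1" "(1 - fps_X) ^ 2 * inverse ((1 - fps_X :: 'a fps) ^ 2) = 1"
    using G0 by (simp_all add: inverse_mult_eq_1 inverse_mult_eq_1')
  then show "(fps_X * (1 - fps_X) ^ 2 * inverse G) * (G * inverse ((1 - fps_X) ^ 2)) = fps_X"
    by (metis (no_types, lifting) mult.assoc mult.left_commute mult_1_right)
  show "(G * inverse ((1 - fps_X) ^ 2)) $ 0 \<noteq> 0"
    using G0 by (simp add: power2_eq_square)
qed

lemma fps_cubic_solution_nth:
  fixes u :: "'a::field_char_0 fps" and a c :: 'a
  assumes u0: "u $ 0 = 0" and a: "a \<noteq> 0" and n: "n > 0"
    and cubic: "u * (1 - u) ^ 2 = fps_X * (fps_const a + fps_const c * u)"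
  shows "of_nat n * u $ n
       = (\<Sum>k=1..n. c ^ (n - k) * a ^ k * of_nat (n choose k) * of_nat ((2 * n + k - 2) choose (k - 1)))"
proof -
  define G where "G = fps_const a + fps_const c * fps_X"
  have "of_nat n * u $ n = ((G * inverse ((1 - fps_X) ^ 2)) ^ n) $ (n - 1)"
    using fps_lagrange_inversion[OF fps_cubic_lagrange_form[OF a]
        fps_cubic_compose_inverse[OF u0 a cubic] n]
    by (simp add: G_def)
  also have "(G * inverse ((1 - fps_X) ^ 2)) ^ n = G ^ n * inverse ((1 - fps_X) ^ (2 * n))"
    by (simp add: power_mult_distrib fps_inverse_power flip: power_mult)
  also have "(G ^ n * inverse ((1 - fps_X) ^ (2 * n))) $ (n - 1)
      = (\<Sum>k=1..n. c ^ (n - k) * a ^ k * of_nat (n choose k) * of_nat ((2 * n + k - 2) choose (k - 1)))"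
    unfolding G_def using n by (intro fps_linear_power_div_one_minus_X_power_nth) simp_all
  finally show ?thesis .
qed

lemma fps_cubic_solution_geometric_nth:
  fixes u H :: "'a::field_char_0 fps" and a c :: 'a
  assumes u0: "u $ 0 = 0" and a: "a \<noteq> 0" and n: "n > 0"
    and cubic: "u * (1 - u) ^ 2 = fps_X * (fps_const a + fps_const c * u)"
    and H: "H * (1 - u) = 1"
  shows "of_nat n * H $ n
       = (\<Sum>k=1..n. c ^ (n - k) * a ^ k * of_nat (n choose k) * of_nat ((2 * n + k) choose (k - 1)))"
proof -
  define G where "G = fps_const a + fps_const c * fps_X"
  define w where "w = fps_X * (1 - fps_X) ^ 2 * inverse G"
  have uw: "u oo w = fps_X"
    unfolding w_def G_def by (rule fps_cubic_compose_inverse[OF u0 a cubic])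
  have w0: "w $ 0 = 0" by (simp add: w_def)
  have "(H oo w) * (1 - fps_X) = (H * (1 - u)) oo w"
    by (simp add: fps_compose_mult_distrib[OF w0] fps_compose_sub_distrib uw)
  then have "(H oo w) * (1 - fps_X) = 1" using H by simp
  then have Hw: "H oo w = inverse (1 - fps_X)"
    by (metis fps_inverse_unique mult.commute)
  have "of_nat n * H $ n
      = (fps_deriv (inverse (1 - fps_X)) * (G * inverse ((1 - fps_X) ^ 2)) ^ n) $ (n - 1)"
    using fps_lagrange_inversion[OF fps_cubic_lagrange_form[OF a] Hw[unfolded w_def G_def] n]
    by (simp add: G_def)
  also have "fps_deriv (inverse (1 - fps_X)) * (G * inverse ((1 - fps_X) ^ 2)) ^ n
      = G ^ n * inverse ((1 - fps_X) ^ (2 * n + 2))"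
    by (simp add: fps_inverse_deriv power_mult_distrib fps_inverse_power fps_inverse_mult mult_ac
        flip: power_mult power_add)
  also have "(G ^ n * inverse ((1 - fps_X) ^ (2 * n + 2))) $ (n - 1)
      = (\<Sum>k=1..n. c ^ (n - k) * a ^ k * of_nat (n choose k) * of_nat ((2 * n + 2 + k - 2) choose (k - 1)))"
    unfolding G_def using n by (intro fps_linear_power_div_one_minus_X_power_nth) simp_all
  finally show ?thesis by simp
qed

section \<open>Forests and colored trees\<close>

definition trees_of_size :: "'a ptree set \<Rightarrow> nat \<Rightarrow> 'a ptree set" where
  "trees_of_size S n = {t \<in> S. nverts t = n}"

definition forests :: "'a ptree set \<Rightarrow> nat \<Rightarrow> 'a ptree list set" where
  "forests S n = {ts. set ts \<subseteq> S \<and> sum_list (map nverts ts) = n}"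

lemma nverts_pos: "0 < nverts t"
  by (cases t) auto

lemma trees_of_size_0 [simp]: "trees_of_size S 0 = {}"
  by (simp add: trees_of_size_def nverts_pos)

lemma forests_0: "forests S 0 = {[]}"
proof -
  have "ts = []" if "sum_list (map nverts ts) = 0" for ts :: "'a ptree list"
    using that nverts_pos[of "hd ts"] by (cases ts) auto
  then show ?thesis unfolding forests_def by auto
qed

lemma forests_Suc:
  "forests S (Suc n) =
     (\<Union>k\<in>{1..Suc n}. (\<lambda>(t, ts). t # ts) ` (trees_of_size S k \<times> forests S (Suc n - k)))"
proof (intro equalityI subsetI)
  fix ts assume "ts \<in> forests S (Suc n)"
  then obtain t ts' where ts: "ts = t # ts'" "t \<in> S" "set ts' \<subseteq> S"
      "nverts t + sum_list (map nverts ts') = Suc n"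
    by (cases ts) (auto simp: forests_def)
  then have "nverts t \<in> {1..Suc n}" using nverts_pos[of t] by (simp add: Suc_le_eq)
  moreover have "(t, ts') \<in> trees_of_size S (nverts t) \<times> forests S (Suc n - nverts t)"
    using ts by (auto simp: trees_of_size_def forests_def)
  ultimately show "ts \<in> (\<Union>k\<in>{1..Suc n}.
      (\<lambda>(t, ts). t # ts) ` (trees_of_size S k \<times> forests S (Suc n - k)))"
    using ts(1) by blast
qed (auto simp: trees_of_size_def forests_def)

lemma finite_forests:
  assumes "\<And>k. k \<le> n \<Longrightarrow> finite (trees_of_size S k)"
  shows "finite (forests S n)"
  using assms
proof (induction n rule: less_induct)
  case (less n)
  show ?case
  proof (cases n)
    case 0
    then show ?thesis by (simp add: forests_0)
  next
    case (Suc n')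
    then show ?thesis
      using less unfolding Suc forests_Suc by auto
  qed
qed

lemma card_forests_Suc:
  assumes fin: "\<And>k. finite (trees_of_size S k)"
  shows "card (forests S (Suc n)) =
           (\<Sum>k=1..Suc n. card (trees_of_size S k) * card (forests S (Suc n - k)))"
proof -
  have "inj_on (\<lambda>(t, ts). t # ts) X" for X :: "('a ptree \<times> 'a ptree list) set"
    by (auto simp: inj_on_def)
  then show ?thesis
    unfolding forests_Suc
    by (subst card_UN_disjoint)
       (auto simp: fin finite_forests card_image card_cartesian_product, auto simp: trees_of_size_def)
qed

definition size_gf :: "'a ptree set \<Rightarrow> real fps" where
  "size_gf S = Abs_fps (\<lambda>n. real (card (trees_of_size S n)))"

definition forest_gf :: "'a ptree set \<Rightarrow> real fps" where
  "forest_gf S = Abs_fps (\<lambda>n. real (card (forests S n)))"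

lemma forest_gf_times_one_minus_size_gf:
  assumes fin: "\<And>k. finite (trees_of_size S k)"
  shows "forest_gf S * (1 - size_gf S) = 1"
proof -
  have "forest_gf S = 1 + size_gf S * forest_gf S"
  proof (rule fps_ext)
    fix n
    show "forest_gf S $ n = (1 + size_gf S * forest_gf S) $ n"
    proof (cases n)
      case 0
      then show ?thesis by (simp add: forest_gf_def size_gf_def forests_0)
    next
      case (Suc n')
      have "(size_gf S * forest_gf S) $ Suc n'
          = (\<Sum>k=1..Suc n'. size_gf S $ k * forest_gf S $ (Suc n' - k))"
        by (simp add: fps_mult_nth sum.atLeast_Suc_atMost size_gf_def)
      also have "\<dots> = forest_gf S $ Suc n'"
        by (simp add: card_forests_Suc[OF fin] forest_gf_def size_gf_def)
      finally show ?thesis using Suc by simp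
    qed
  qed
  then show ?thesis by (simp add: algebra_simps)
qed

definition colored_trees :: "nat \<Rightarrow> (nat \<Rightarrow> nat \<Rightarrow> bool) \<Rightarrow> nat set \<Rightarrow> nat ptree set" where
  "colored_trees N A C = {t. A_colored N A t \<and> root_label t \<in> C}"

lemma root_label_colored: "A_colored N A t \<Longrightarrow> root_label t \<in> {1..N}"
  by (cases t) auto

lemma colored_trees_Int_colors: "colored_trees N A (C \<inter> {1..N}) = colored_trees N A C"
  using root_label_colored by (fastforce simp: colored_trees_def)

lemma t_A_root_eq_card: "t_A_root N A c n = card (trees_of_size (colored_trees N A {c}) n)"
  by (simp add: t_A_root_def trees_of_size_def colored_trees_def conj_assoc)

lemma t_A_eq_card: "t_A N A n = card (trees_of_size (colored_trees N A {1..N}) n)"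
  unfolding t_A_def
  by (rule arg_cong[where f = card])
     (use root_label_colored in \<open>auto simp: trees_of_size_def colored_trees_def\<close>)

lemma trees_of_size_colored_trees_Suc:
  assumes "c \<in> {1..N}"
  shows "trees_of_size (colored_trees N A {c}) (Suc n) = PNode c ` forests (colored_trees N A {j. A c j}) n"
proof (intro equalityI subsetI)
  fix T assume "T \<in> trees_of_size (colored_trees N A {c}) (Suc n)"
  then obtain ts where "T = PNode c ts" "ts \<in> forests (colored_trees N A {j. A c j}) n"
    by (cases T) (auto simp: trees_of_size_def colored_trees_def forests_def)
  then show "T \<in> PNode c ` forests (colored_trees N A {j. A c j}) n" by blast
qed (use assms in \<open>auto simp: trees_of_size_def colored_trees_def forests_def\<close>)

lemma colored_trees_by_root:
  "trees_of_size (colored_trees N A C) n = (\<Union>c\<in>C. trees_of_size (colored_trees N A {c}) n)"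
  by (auto simp: trees_of_size_def colored_trees_def)

lemma finite_trees_of_size_colored_trees: "finite (trees_of_size (colored_trees N A C) n)"
proof (induction n arbitrary: C rule: less_induct)
  case (less n)
  have "finite (trees_of_size (colored_trees N A {c}) n)" if "c \<in> {1..N}" for c
  proof (cases n)
    case (Suc n')
    then show ?thesis
      using less that by (simp add: trees_of_size_colored_trees_Suc finite_forests)
  qed simp
  then have "finite (trees_of_size (colored_trees N A (C \<inter> {1..N})) n)"
    unfolding colored_trees_by_root[of _ _ "C \<inter> {1..N}"] by (intro finite_UN_I) auto
  then show ?case by (simp only: colored_trees_Int_colors)
qed

lemma card_trees_of_size_colored_trees:
  assumes "finite C"
  shows "card (trees_of_size (colored_trees N A C) n) = (\<Sum>c\<in>C. t_A_root N A c n)"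
  unfolding colored_trees_by_root[of _ _ C] t_A_root_eq_card
proof (rule card_UN_disjoint[OF assms])
  show "\<forall>c\<in>C. finite (trees_of_size (colored_trees N A {c}) n)"
    by (simp add: finite_trees_of_size_colored_trees)
qed (auto simp: trees_of_size_def colored_trees_def)

lemma t_A_eq_sum_t_A_root: "t_A N A n = (\<Sum>c\<in>{1..N}. t_A_root N A c n)"
  by (simp add: t_A_eq_card card_trees_of_size_colored_trees)

lemma size_gf_colored_trees_nth:
  "finite C \<Longrightarrow> size_gf (colored_trees N A C) $ n = (\<Sum>c\<in>C. real (t_A_root N A c n))"
  by (simp add: size_gf_def card_trees_of_size_colored_trees)

lemma t_A_root_eq_forest_gf_nth:
  assumes "c \<in> {1..N}"
  shows "real (t_A_root N A c n) = (fps_X * forest_gf (colored_trees N A {j. A c j})) $ n"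
proof (cases n)
  case 0
  then show ?thesis by (simp add: t_A_root_eq_card)
next
  case (Suc n')
  have "inj_on (PNode c) X" for X by (simp add: inj_on_def)
  then show ?thesis
    using assms by (simp add: Suc t_A_root_eq_card trees_of_size_colored_trees_Suc
        card_image forest_gf_def)
qed

section \<open>The matrix A(l,m)\<close>

lemma colored_trees_A_lm_children:
  shows "c \<le> l \<Longrightarrow> colored_trees (l + m) (A_lm l m) {j. A_lm l m c j}
                  = colored_trees (l + m) (A_lm l m) {1..l + m}"
    and "l < c \<Longrightarrow> colored_trees (l + m) (A_lm l m) {j. A_lm l m c j}
                  = colored_trees (l + m) (A_lm l m) {1..l}"
proof -
  have "c \<le> l \<Longrightarrow> {j. A_lm l m c j} \<inter> {1..l + m} = {1..l + m}"
    and "l < c \<Longrightarrow> {j. A_lm l m c j} \<inter> {1..l + m} = {1..l}"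
    by (auto simp: A_lm_def)
  then show "c \<le> l \<Longrightarrow> colored_trees (l + m) (A_lm l m) {j. A_lm l m c j}
                  = colored_trees (l + m) (A_lm l m) {1..l + m}"
    and "l < c \<Longrightarrow> colored_trees (l + m) (A_lm l m) {j. A_lm l m c j}
                  = colored_trees (l + m) (A_lm l m) {1..l}"
    by (metis colored_trees_Int_colors)+
qed

lemma t_A_root_A_lm_eq_forest_gf_nth:
  shows "i \<in> {1..l} \<Longrightarrow> real (t_A_root (l + m) (A_lm l m) i n)
           = (fps_X * forest_gf (colored_trees (l + m) (A_lm l m) {1..l + m})) $ n"
    and "i \<in> {l + 1..l + m} \<Longrightarrow> real (t_A_root (l + m) (A_lm l m) i n)
           = (fps_X * forest_gf (colored_trees (l + m) (A_lm l m) {1..l})) $ n"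
  by (simp_all add: t_A_root_eq_forest_gf_nth colored_trees_A_lm_children)

lemma A_lm_cubic:
  fixes l m :: nat
  defines "u \<equiv> of_nat l * (fps_X * forest_gf (colored_trees (l + m) (A_lm l m) {1..l + m}))"
  shows "u * (1 - u) ^ 2 = fps_X * (fps_const (real l) + fps_const (real m - real l) * u)"
    and "forest_gf (colored_trees (l + m) (A_lm l m) {1..l}) * (1 - u) = 1"
proof -
  define F1 where "F1 = forest_gf (colored_trees (l + m) (A_lm l m) {1..l + m})"
  define F2 where "F2 = forest_gf (colored_trees (l + m) (A_lm l m) {1..l})"
  have "size_gf (colored_trees (l + m) (A_lm l m) {1..l + m}) = u + of_nat m * (fps_X * F2)"
    by (rule fps_ext)
       (simp add: size_gf_colored_trees_nth sum.ub_add_nat t_A_root_A_lm_eq_forest_gf_nth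
          u_def F1_def F2_def fps_of_nat)
  then have F1: "F1 * (1 - u - of_nat m * (fps_X * F2)) = 1"
    using forest_gf_times_one_minus_size_gf[
        OF finite_trees_of_size_colored_trees[of "l + m" "A_lm l m" "{1..l + m}"]]
    by (simp add: F1_def diff_diff_eq)
  have "size_gf (colored_trees (l + m) (A_lm l m) {1..l}) = u"
    by (rule fps_ext)
       (simp add: size_gf_colored_trees_nth t_A_root_A_lm_eq_forest_gf_nth u_def fps_of_nat)
  then show F2: "forest_gf (colored_trees (l + m) (A_lm l m) {1..l}) * (1 - u) = 1"
    using forest_gf_times_one_minus_size_gf[
        OF finite_trees_of_size_colored_trees[of "l + m" "A_lm l m" "{1..l}"]]
    by simp
  have "fps_const (real m - real l) = of_nat m - of_nat l" "fps_const (real l) = of_nat l"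
    by (simp_all flip: fps_of_nat)
  moreover have "u = of_nat l * (fps_X * F1)" by (simp add: u_def F1_def)
  ultimately show "u * (1 - u) ^ 2 = fps_X * (fps_const (real l) + fps_const (real m - real l) * u)"
    using F1 F2[folded F2_def] by algebra
qed

lemma t_A_root_A_lm_low:
  fixes l m n :: nat
  assumes l: "l > 0" and n: "n > 0" and i: "i \<in> {1..l}"
  shows "real (t_A_root (l + m) (A_lm l m) i n) =
           1 / real n * (\<Sum>k=1..n. (real m - real l) ^ (n - k) * real l ^ (k - 1)
                            * real (n choose k) * real ((2 * n + k - 2) choose (k - 1)))"
proof -
  define T where "T = fps_X * forest_gf (colored_trees (l + m) (A_lm l m) {1..l + m})"
  define S where "S = (\<Sum>k=1..n. (real m - real l) ^ (n - k) * real l ^ (k - 1)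
                            * real (n choose k) * real ((2 * n + k - 2) choose (k - 1)))"
  have "real n * (of_nat l * T) $ n = real l * S"
    using fps_cubic_solution_nth[OF _ _ n A_lm_cubic(1)[folded T_def]] l
    by (simp add: S_def T_def sum_distrib_left power_eq_if mult_ac)
  then have "real n * T $ n = S" using l by (simp add: fps_of_nat)
  moreover have "real (t_A_root (l + m) (A_lm l m) i n) = T $ n"
    unfolding T_def by (rule t_A_root_A_lm_eq_forest_gf_nth(1)[OF i])
  ultimately show ?thesis using n by (simp add: S_def field_simps)
qed

lemma t_A_root_A_lm_high:
  fixes l m n :: nat
  assumes l: "l > 0" and n: "n \<ge> 2" and i: "i \<in> {l + 1..l + m}"
  shows "real (t_A_root (l + m) (A_lm l m) i n) =
           1 / real (n - 1) * (\<Sum>k=1..n - 1. (real m - real l) ^ (n - k - 1) * real l ^ k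
                                  * real ((n - 1) choose k) * real ((2 * n + k - 2) choose (k - 1)))"
proof -
  define F where "F = forest_gf (colored_trees (l + m) (A_lm l m) {1..l})"
  obtain n' where n': "n = Suc n'" "n' > 0" using n by (cases n) auto
  have "real n' * F $ n' = (\<Sum>k=1..n'. (real m - real l) ^ (n' - k) * real l ^ k
                                * real (n' choose k) * real ((2 * n' + k) choose (k - 1)))"
    using fps_cubic_solution_geometric_nth[OF _ _ \<open>n' > 0\<close> A_lm_cubic(1)[of l m]
        A_lm_cubic(2)[of l m, folded F_def]] l
    by simp
  moreover have "real (t_A_root (l + m) (A_lm l m) i n) = (fps_X * F) $ n"
    unfolding F_def by (rule t_A_root_A_lm_eq_forest_gf_nth(2)[OF i])
  ultimately show ?thesis
    using n' by (simp add: field_simps)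
qed

definition A_lm_summand :: "nat \<Rightarrow> nat \<Rightarrow> nat \<Rightarrow> nat \<Rightarrow> real" where
  "A_lm_summand l m n k =
     (real m - real l) ^ (n - k - 1) * real l ^ k * real (n choose k) * real ((2 * n + k - 2) choose (k - 1))"

lemma low_count_sum_eq:
  fixes l m n :: nat
  assumes n: "n > 0"
  shows "real l * (\<Sum>k=1..n. (real m - real l) ^ (n - k) * real l ^ (k - 1)
                              * real (n choose k) * real ((2 * n + k - 2) choose (k - 1)))
       = (\<Sum>k=1..n - 1. (real m - real l) * A_lm_summand l m n k)
         + real l ^ n * real ((3 * n - 2) choose (n - 1))"
proof -
  have "real l * (\<Sum>k=1..n. (real m - real l) ^ (n - k) * real l ^ (k - 1)
                              * real (n choose k) * real ((2 * n + k - 2) choose (k - 1)))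
      = (\<Sum>k=1..n. (real m - real l) ^ (n - k) * real l ^ k
                     * real (n choose k) * real ((2 * n + k - 2) choose (k - 1)))"
    unfolding sum_distrib_left by (intro sum.cong refl) (auto simp: power_eq_if)
  also have "\<dots> = (\<Sum>k=1..n - 1. (real m - real l) ^ (n - k) * real l ^ k
                     * real (n choose k) * real ((2 * n + k - 2) choose (k - 1)))
                 + real l ^ n * real ((3 * n - 2) choose (n - 1))"
  proof -
    have "{1..n} = insert n {1..n - 1}" using n by auto
    moreover have "2 * n + n - 2 = 3 * n - 2" by simp
    ultimately show ?thesis using n by simp
  qed
  also have "(\<Sum>k=1..n - 1. (real m - real l) ^ (n - k) * real l ^ k
                     * real (n choose k) * real ((2 * n + k - 2) choose (k - 1)))
      = (\<Sum>k=1..n - 1. (real m - real l) * A_lm_summand l m n k)"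
  proof (intro sum.cong refl)
    fix k assume "k \<in> {1..n - 1}"
    then have "n - k = Suc (n - k - 1)" by auto
    then show "(real m - real l) ^ (n - k) * real l ^ k * real (n choose k) * real ((2 * n + k - 2) choose (k - 1))
        = (real m - real l) * A_lm_summand l m n k"
      by (simp add: A_lm_summand_def)
  qed
  finally show ?thesis .
qed

lemma high_count_sum_eq:
  fixes l m n :: nat
  assumes n: "n > 0"
  shows "(\<Sum>k=1..n - 1. (real m - real l) ^ (n - k - 1) * real l ^ k
                         * real ((n - 1) choose k) * real ((2 * n + k - 2) choose (k - 1)))
       = (\<Sum>k=1..n - 1. (real n - real k) / real n * A_lm_summand l m n k)"
proof (intro sum.cong refl)
  fix k assume "k \<in> {1..n - 1}"
  then have "k \<le> n" by auto
  then have "real (n - k) = real n - real k" by simp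
  then have "(real n - real k) * real (n choose k) = real n * real ((n - 1) choose k)"
    by (metis binomial_absorb_comp of_nat_mult)
  then have "real ((n - 1) choose k) = (real n - real k) / real n * real (n choose k)"
    using n by (simp add: field_simps)
  then show "(real m - real l) ^ (n - k - 1) * real l ^ k
               * real ((n - 1) choose k) * real ((2 * n + k - 2) choose (k - 1))
      = (real n - real k) / real n * A_lm_summand l m n k"
    by (simp add: A_lm_summand_def)
qed

lemma A_lm_total_count_identity:
  fixes l m n :: nat
  assumes n: "n \<ge> 2"
  shows "real l * (1 / real n * (\<Sum>k=1..n. (real m - real l) ^ (n - k) * real l ^ (k - 1)
                                   * real (n choose k) * real ((2 * n + k - 2) choose (k - 1))))
       + real m * (1 / real (n - 1) * (\<Sum>k=1..n - 1. (real m - real l) ^ (n - k - 1) * real l ^ k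
                                   * real ((n - 1) choose k) * real ((2 * n + k - 2) choose (k - 1))))
     = (\<Sum>k=1..n - 1. ((2 * real m - real l) * real n - real m * real k + (real l - real m))
                       / (real n * (real n - 1))
                     * (real m - real l) ^ (n - k - 1) * real l ^ k
                     * real (n choose k) * real ((2 * n + k - 2) choose (k - 1)))
       + 1 / real n * real l ^ n * real ((3 * n - 2) choose (n - 1))"
    (is "real l * (1 / real n * ?S1) + real m * (1 / real (n - 1) * ?S2) = _")
proof -
  define X where "X = A_lm_summand l m n"
  have n0: "n > 0" using n by simp
  have n_pos: "real n \<noteq> 0" "real n - 1 \<noteq> 0" "real (n - 1) = real n - 1" using n by auto
  have coefficient: "(real m - real l) / real n + real m * ((real n - real k) / real n) / (real n - 1)
      = ((2 * real m - real l) * real n - real m * real k + (real l - real m)) / (real n * (real n - 1))"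
    for k using n_pos by (simp add: field_simps)
  have "real l * (1 / real n * ?S1) + real m * (1 / real (n - 1) * ?S2)
      = 1 / real n * (real l * ?S1) + real m / (real n - 1) * ?S2"
    unfolding n_pos(3) by simp
  also have "\<dots> = (\<Sum>k=1..n - 1. (real m - real l) / real n * X k)
      + (\<Sum>k=1..n - 1. real m * ((real n - real k) / real n) / (real n - 1) * X k)
      + 1 / real n * real l ^ n * real ((3 * n - 2) choose (n - 1))"
    unfolding low_count_sum_eq[OF n0, where l = l and m = m]
      high_count_sum_eq[OF n0, where l = l and m = m] X_def
    by (simp add: sum_distrib_left distrib_left mult_ac)
  also have "\<dots> = (\<Sum>k=1..n - 1. ((real m - real l) / real n
                    + real m * ((real n - real k) / real n) / (real n - 1)) * X k)
      + 1 / real n * real l ^ n * real ((3 * n - 2) choose (n - 1))"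
    by (simp add: distrib_right sum.distrib)
  also have "\<dots> = (\<Sum>k=1..n - 1. ((2 * real m - real l) * real n - real m * real k + (real l - real m))
                       / (real n * (real n - 1))
                     * (real m - real l) ^ (n - k - 1) * real l ^ k
                     * real (n choose k) * real ((2 * n + k - 2) choose (k - 1)))
       + 1 / real n * real l ^ n * real ((3 * n - 2) choose (n - 1))"
    unfolding coefficient by (simp add: X_def A_lm_summand_def mult_ac)
  finally show ?thesis .
qed

lemma t_A_A_lm:
  fixes l m n :: nat
  assumes l: "l > 0" and n: "n \<ge> 2"
  shows "real (t_A (l + m) (A_lm l m) n) =
           (\<Sum>k=1..n - 1. ((2 * real m - real l) * real n - real m * real k + (real l - real m))
                             / (real n * (real n - 1))
                          * (real m - real l) ^ (n - k - 1) * real l ^ k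
                          * real (n choose k) * real ((2 * n + k - 2) choose (k - 1)))
         + 1 / real n * real l ^ n * real ((3 * n - 2) choose (n - 1))"
proof -
  define low where "low = 1 / real n * (\<Sum>k=1..n. (real m - real l) ^ (n - k) * real l ^ (k - 1)
                                   * real (n choose k) * real ((2 * n + k - 2) choose (k - 1)))"
  define high where "high = 1 / real (n - 1) * (\<Sum>k=1..n - 1. (real m - real l) ^ (n - k - 1) * real l ^ k
                                   * real ((n - 1) choose k) * real ((2 * n + k - 2) choose (k - 1)))"
  have low_count: "real (t_A_root (l + m) (A_lm l m) i n) = low" if "i \<in> {1..l}" for i
    unfolding low_def using n that by (intro t_A_root_A_lm_low[OF l]) auto
  have high_count: "real (t_A_root (l + m) (A_lm l m) i n) = high" if "i \<in> {l + 1..l + m}" for i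
    unfolding high_def using that by (rule t_A_root_A_lm_high[OF l n])
  have "real (t_A (l + m) (A_lm l m) n)
      = (\<Sum>i\<in>{1..l}. real (t_A_root (l + m) (A_lm l m) i n))
        + (\<Sum>i\<in>{l + 1..l + m}. real (t_A_root (l + m) (A_lm l m) i n))"
    unfolding t_A_eq_sum_t_A_root of_nat_sum by (rule sum.ub_add_nat) simp
  also have "\<dots> = real l * low + real m * high"
    using low_count high_count by simp
  also have "\<dots> = (\<Sum>k=1..n - 1. ((2 * real m - real l) * real n - real m * real k + (real l - real m))
                             / (real n * (real n - 1))
                          * (real m - real l) ^ (n - k - 1) * real l ^ k
                          * real (n choose k) * real ((2 * n + k - 2) choose (k - 1)))
         + 1 / real n * real l ^ n * real ((3 * n - 2) choose (n - 1))"
    unfolding low_def high_def using n by (rule A_lm_total_count_identity)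
  finally show ?thesis .
qed

theorem theorem35:
  fixes l m n :: nat
  assumes "l > 0" "m > 0" "n > 0"
  shows "(\<forall>i\<in>{1..l}. real (t_A_root (l+m) (A_lm l m) i n) =
            1 / real n * (\<Sum>k=1..n. (real m - real l) ^ (n-k) * real l ^ (k-1)
                             * real (n choose k) * real ((2*n+k-2) choose (k-1))))
       \<and> (n \<ge> 2 \<longrightarrow> (\<forall>i\<in>{l+1..l+m}. real (t_A_root (l+m) (A_lm l m) i n) =
            1 / real (n-1) * (\<Sum>k=1..n-1. (real m - real l) ^ (n-k-1) * real l ^ k
                             * real ((n-1) choose k) * real ((2*n+k-2) choose (k-1)))))
       \<and> (n \<ge> 2 \<longrightarrow> real (t_A (l+m) (A_lm l m) n) =
            (\<Sum>k=1..n-1. ((2*real m - real l) * real n - real m * real k + (real l - real m))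
                             / (real n * (real n - 1))
                          * (real m - real l) ^ (n-k-1) * real l ^ k
                          * real (n choose k) * real ((2*n+k-2) choose (k-1)))
            + 1 / real n * real l ^ n * real ((3*n-2) choose (n-1)))"
  by (intro conjI impI ballI t_A_root_A_lm_low[OF assms(1,3)] t_A_root_A_lm_high[OF assms(1)]
      t_A_A_lm[OF assms(1)])

end
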